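(* Let $a_1,\dots,a_d$ be positive integers with $\gcd(a_1,\dots,a_d)=1$, and let $N$ be a positive integer which is a $\mathbb Z_{\ge0}$-linear combination of $a_1,\dots,a_d$. Let $\mathcal M$ be a maximal element of $\mathfrak M$. Then for every $0\le i<N$ there is exactly one $m\in\mathcal M$ with $m\equiv i\pmod N$. In particular every maximal element of $\mathfrak M$ has exactly $N$ elements.
   Context: $\mathcal S_+=\{N+\sum_ic_ia_i: c_i\in\mathbb Z_{\ge0}\}$, $\mathcal S_-=-\mathcal S_+$, $\mathcal S=\mathcal S_+\cup\mathcal S_-$, and $\mathfrak M=\{\mathcal M\subset\mathbb Z:\ m,m'\in\mathcal M\Rightarrow m-m'\notin\mathcal S\}$, partially ordered by inclusion. *)

theory Defs
  imports Main "HOL-Number_Theory.Cong"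
begin

text \<open>Generators a_1..a_d are encoded as a :: nat => int on indices 0..d-1.\<close>

definition Splus :: "nat \<Rightarrow> (nat \<Rightarrow> int) \<Rightarrow> int \<Rightarrow> int set" where
  "Splus d a N = {N + (\<Sum>i<d. c i * a i) | c :: nat \<Rightarrow> int. \<forall>i<d. c i \<ge> 0}"

definition Sminus :: "nat \<Rightarrow> (nat \<Rightarrow> int) \<Rightarrow> int \<Rightarrow> int set" where
  "Sminus d a N = uminus ` Splus d a N"

definition Sset :: "nat \<Rightarrow> (nat \<Rightarrow> int) \<Rightarrow> int \<Rightarrow> int set" where
  "Sset d a N = Splus d a N \<union> Sminus d a N"

definition frakM :: "nat \<Rightarrow> (nat \<Rightarrow> int) \<Rightarrow> int \<Rightarrow> int set set" where
  "frakM d a N = {M. \<forall>m\<in>M. \<forall>m'\<in>M. m - m' \<notin> Sset d a N}"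

definition maximal_frakM :: "nat \<Rightarrow> (nat \<Rightarrow> int) \<Rightarrow> int \<Rightarrow> int set \<Rightarrow> bool" where
  "maximal_frakM d a N M \<longleftrightarrow> M \<in> frakM d a N \<and> (\<forall>M'\<in>frakM d a N. M \<subseteq> M' \<longrightarrow> M' = M)"

end

theory Submission
  imports Defs
begin

text \<open>Two elements of \<open>M\<close> in the same residue class mod \<open>N\<close> differ by some \<open>kN\<close>,
  and \<open>kN \<in> S\<^sub>+\<close> for \<open>k \<ge> 1\<close>; so each class meets \<open>M\<close> at most once. If a class
  \<open>i + N\<int>\<close> missed \<open>M\<close>, maximality would put each of its points into \<open>M + S\<^sub>+\<close> or
  \<open>M - S\<^sub>+\<close>. Points far below \<open>M\<close> lie in \<open>M - S\<^sub>+\<close>, points far above do not, so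
  some \<open>x\<close> satisfies \<open>x \<in> m - S\<^sub>+\<close> and \<open>x + N \<in> m' + S\<^sub>+\<close>. Since \<open>S\<^sub>+\<close> is closed
  under \<open>(s, t) \<mapsto> s + t - N\<close>, this gives \<open>m - m' \<in> S\<^sub>+\<close>, contradicting \<open>M \<in> frakM\<close>.\<close>

lemma Sset_iff: "x \<in> Sset d a N \<longleftrightarrow> x \<in> Splus d a N \<or> -x \<in> Splus d a N"
  unfolding Sset_def Sminus_def by (auto simp: image_iff intro: bexI[where x="-x"])

lemma Sset_uminus_iff: "-x \<in> Sset d a N \<longleftrightarrow> x \<in> Sset d a N"
  by (auto simp: Sset_iff)

lemma SplusI:
  assumes "\<forall>i<d. c i \<ge> 0" and "x = N + (\<Sum>i<d. c i * a i)"
  shows "x \<in> Splus d a N"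
  unfolding Splus_def using assms by blast

lemma Splus_ge:
  assumes "\<forall>i<d. a i \<ge> 0" and "x \<in> Splus d a N"
  shows "N \<le> x"
proof -
  obtain c where c: "\<forall>i<d. c i \<ge> 0" "x = N + (\<Sum>i<d. c i * a i)"
    using assms(2) unfolding Splus_def by blast
  have "0 \<le> (\<Sum>i<d. c i * a i)"
    using c(1) assms(1) by (intro sum_nonneg) simp
  with c(2) show ?thesis by simp
qed

lemma Splus_add:
  assumes "x \<in> Splus d a N" and "y \<in> Splus d a N"
  shows "x + y - N \<in> Splus d a N"
proof -
  obtain c where c: "\<forall>i<d. c i \<ge> 0" "x = N + (\<Sum>i<d. c i * a i)"
    using assms(1) unfolding Splus_def by blast
  obtain c' where c': "\<forall>i<d. c' i \<ge> 0" "y = N + (\<Sum>i<d. c' i * a i)"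
    using assms(2) unfolding Splus_def by blast
  have "x + y - N = N + (\<Sum>i<d. (c i + c' i) * a i)"
    using c c' by (simp add: sum.distrib distrib_right)
  then show ?thesis
    using c(1) c'(1) by (intro SplusI[of d "\<lambda>i. c i + c' i"]) auto
qed

lemma self_in_Splus: "N \<in> Splus d a N"
  by (rule SplusI[of d "\<lambda>_. 0"]) simp_all

lemma mult_in_Splus:
  assumes "\<exists>c. (\<forall>i<d. c i \<ge> 0) \<and> N = (\<Sum>i<d. c i * a i)" and "1 \<le> k"
  shows "k * N \<in> Splus d a N"
  using assms(2)
proof (induction k rule: int_ge_induct)
  case base
  then show ?case by (simp add: self_in_Splus)
next
  case (step k)
  have "N + N \<in> Splus d a N"
    using assms(1) SplusI by blast
  from Splus_add[OF step.IH this] show ?case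
    by (simp add: algebra_simps)
qed

lemma zero_notin_Sset:
  assumes "\<forall>i<d. a i \<ge> 0" and "0 < N"
  shows "0 \<notin> Sset d a N"
  using Splus_ge[OF assms(1), of 0 N] assms(2) by (auto simp: Sset_iff)

lemma frakM_cong_imp_eq:
  assumes "M \<in> frakM d a N" and "\<exists>c. (\<forall>i<d. c i \<ge> 0) \<and> N = (\<Sum>i<d. c i * a i)"
    and "m \<in> M" "m' \<in> M" "[m = m'] (mod N)"
  shows "m = m'"
proof (rule ccontr)
  assume "m \<noteq> m'"
  obtain k where k: "m - m' = k * N"
    using assms(5) by (metis cong_iff_dvd_diff dvd_def mult.commute)
  with \<open>m \<noteq> m'\<close> have "k \<noteq> 0" by auto
  then have "1 \<le> k \<or> 1 \<le> -k" by linarith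
  then have "m - m' \<in> Sset d a N"
    using mult_in_Splus[OF assms(2), of k] mult_in_Splus[OF assms(2), of "-k"] k
    by (auto simp: Sset_iff)
  with assms(1,3,4) show False
    unfolding frakM_def by blast
qed

lemma maximal_frakM_cover:
  assumes "maximal_frakM d a N M" and "0 \<notin> Sset d a N" and "x \<notin> M"
  shows "\<exists>m\<in>M. x - m \<in> Sset d a N"
proof (rule ccontr)
  assume "\<not> (\<exists>m\<in>M. x - m \<in> Sset d a N)"
  then have "insert x M \<in> frakM d a N"
    using assms(1,2) Sset_uminus_iff[of "x - _"]
    unfolding maximal_frakM_def frakM_def by auto
  with assms(1,3) show False
    unfolding maximal_frakM_def by blast
qed

lemma int_step_change:
  fixes P :: "int \<Rightarrow> bool"
  assumes "P l" and "\<not> P h" and "l \<le> h"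
  shows "\<exists>k. P k \<and> \<not> P (k + 1)"
  using assms
proof (induction "nat (h - l)" arbitrary: l)
  case 0
  then show ?case by auto
next
  case (Suc n)
  show ?case
  proof (cases "P (l + 1)")
    case True
    with Suc.prems Suc.hyps show ?thesis
      by (intro Suc.hyps(1)[of "l + 1"]) auto
  next
    case False
    with Suc.prems show ?thesis by blast
  qed
qed

lemma maximal_frakM_meets_residue:
  assumes apos: "\<forall>i<d. a i \<ge> 0" and Npos: "0 < N"
    and Mmax: "maximal_frakM d a N M" and fin: "finite M"
  shows "\<exists>m\<in>M. [m = i] (mod N)"
proof (rule ccontr)
  assume none: "\<not> (\<exists>m\<in>M. [m = i] (mod N))"
  have zero: "0 \<notin> Sset d a N"
    using zero_notin_Sset[OF apos Npos] .
  have MfrakM: "M \<in> frakM d a N"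
    using Mmax unfolding maximal_frakM_def by blast
  define B where "B x \<longleftrightarrow> (\<exists>m\<in>M. m - x \<in> Splus d a N)" for x
  have cover: "B x \<or> (\<exists>m\<in>M. x - m \<in> Splus d a N)" if "[x = i] (mod N)" for x
    using maximal_frakM_cover[OF Mmax zero, of x] none that
    by (auto simp: B_def Sset_iff)
  have "M \<noteq> {}"
    using cover[of i] by (auto simp: B_def)
  define lo where "lo = Min M"
  define hi where "hi = Max M"
  have lo: "lo \<le> m" and hi: "m \<le> hi" if "m \<in> M" for m
    using fin that by (auto simp: lo_def hi_def)
  have "lo \<le> hi"
    using \<open>M \<noteq> {}\<close> lo hi by fastforce
  have B_low: "B (i + j * N)" if "i + j * N < lo + N" for j
    using cover[of "i + j * N"] that lo Splus_ge[OF apos]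
    by (fastforce simp: cong_def)
  have not_B_high: "\<not> B (i + j * N)" if "hi - N < i + j * N" for j
    using that hi Splus_ge[OF apos] unfolding B_def by fastforce
  define j0 where "j0 = (lo - i) div N"
  define j1 where "j1 = (hi - i) div N"
  have "i + j0 * N \<le> lo"
    using Npos pos_mod_sign[of N "lo - i"] div_mult_mod_eq[of "lo - i" N]
    unfolding j0_def by linarith
  moreover have "hi - N < i + j1 * N"
    using Npos pos_mod_bound[of N "hi - i"] div_mult_mod_eq[of "hi - i" N]
    unfolding j1_def by linarith
  moreover have "j0 \<le> j1"
    unfolding j0_def j1_def using \<open>lo \<le> hi\<close> Npos by (simp add: zdiv_mono1)
  ultimately obtain k where k: "B (i + k * N)" "\<not> B (i + (k + 1) * N)"
    using int_step_change[of "\<lambda>j. B (i + j * N)" j0 j1] B_low[of j0] not_B_high[of j1] Npos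
    by auto
  obtain m where m: "m \<in> M" "m - (i + k * N) \<in> Splus d a N"
    using k(1) unfolding B_def by blast
  obtain m' where m': "m' \<in> M" "i + (k + 1) * N - m' \<in> Splus d a N"
    using k(2) cover[of "i + (k + 1) * N"] by (auto simp: cong_def)
  have "m - m' \<in> Splus d a N"
    using Splus_add[OF m(2) m'(2)] by (simp add: algebra_simps)
  with MfrakM m(1) m'(1) show False
    unfolding frakM_def by (auto simp: Sset_iff)
qed

lemma card_eq_if_unique_residues:
  fixes M :: "int set"
  assumes "0 < N" and "\<forall>i. 0 \<le> i \<and> i < N \<longrightarrow> (\<exists>!m. m \<in> M \<and> [m = i] (mod N))"
  shows "finite M \<and> card M = nat N"
proof -
  have "bij_betw (\<lambda>m. m mod N) M {0..<N}"
  proof (rule bij_betw_imageI)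
    show "inj_on (\<lambda>m. m mod N) M"
    proof (rule inj_onI)
      fix m m' assume "m \<in> M" "m' \<in> M" "m mod N = m' mod N"
      moreover have "\<exists>!x. x \<in> M \<and> [x = m mod N] (mod N)"
        using assms(2) pos_mod_sign[OF assms(1)] pos_mod_bound[OF assms(1)] by blast
      ultimately show "m = m'"
        by (metis cong_def mod_mod_trivial)
    qed
    show "(\<lambda>m. m mod N) ` M = {0..<N}"
      using assms by (force simp: cong_def)
  qed
  then show ?thesis
    by (simp add: bij_betw_finite bij_betw_same_card)
qed

theorem mainTheorem16:
  fixes d :: nat and a :: "nat \<Rightarrow> int" and N :: int and M :: "int set"
  assumes apos: "\<forall>i<d. a i > 0"
    and gcd1: "Gcd (a ` {..<d}) = 1"
    and Npos: "N > 0"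
    and Ncomb: "\<exists>c :: nat \<Rightarrow> int. (\<forall>i<d. c i \<ge> 0) \<and> N = (\<Sum>i<d. c i * a i)"
    and Mmax: "maximal_frakM d a N M"
  shows "(\<forall>i. 0 \<le> i \<and> i < N \<longrightarrow> (\<exists>!m. m \<in> M \<and> [m = i] (mod N)))
         \<and> finite M \<and> card M = nat N"
  \<comment> \<open>\<open>gcd1\<close> is deliberately unused: the argument works for any positive generators.\<close>
proof -
  have anonneg: "\<forall>i<d. a i \<ge> 0"
    using apos by (simp add: less_imp_le)
  have MfrakM: "M \<in> frakM d a N"
    using Mmax unfolding maximal_frakM_def by blast
  have uniq: "m = m'" if "m \<in> M" "m' \<in> M" "[m = m'] (mod N)" for m m'
    using frakM_cong_imp_eq[OF MfrakM Ncomb that] .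
  have "finite M"
  proof (rule finite_imageD)
    show "inj_on (\<lambda>m. m mod N) M"
      by (rule inj_onI) (auto simp: cong_def intro: uniq)
    show "finite ((\<lambda>m. m mod N) ` M)"
      by (rule finite_subset[of _ "{0..<N}"]) (use Npos in auto)
  qed
  have residues: "\<forall>i. 0 \<le> i \<and> i < N \<longrightarrow> (\<exists>!m. m \<in> M \<and> [m = i] (mod N))"
    using maximal_frakM_meets_residue[OF anonneg Npos Mmax \<open>finite M\<close>] uniq
    by (metis cong_sym cong_trans)
  with card_eq_if_unique_residues[OF Npos residues] show ?thesis
    by blast
qed

end
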